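(* Let $\psi\in\mathfrak M^+_\infty$, $b>0$, and let $t\ge1$ be such that $\mu(\psi;t)\ge b$. Then $$\frac12\,\frac{b^2}{(b+1)^2}\,(\eta(t)-t)\le\frac{\psi(t)}{|\psi'(t)|}\le4\Big(1+\frac1b\Big)(\eta(t)-t),$$ where $\psi'(t)=\psi'(t+0)$ denotes the right derivative.
   Context: Let $\mathfrak M$ be the set of positive, continuous, convex-downward functions $\psi(t)$ of $t\ge1$ with $\lim_{t\to\infty}\psi(t)=0$. For $\psi\in\mathfrak M$ put $\eta(t)=\eta(\psi;t)=\psi^{-1}(\psi(t)/2)$, where $\psi^{-1}$ is the inverse function of $\psi$, and $\mu(t)=\mu(\psi;t)=t/(\eta(t)-t)$. Let $\mathfrak M^+_\infty$ be the set of $\psi\in\mathfrak M$ for which $\mu(\psi;t)$ increases monotonically to $\infty$ as $t\to\infty$. *)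

theory Defs
  imports "HOL-Analysis.Analysis"
begin

text \<open>The class M: positive, continuous, convex (downward) functions on [1,oo) tending to 0.
  Functions are total on the reals; only their values on [1,oo) matter.\<close>
definition class_M :: "(real \<Rightarrow> real) \<Rightarrow> bool" where
  "class_M \<psi> \<longleftrightarrow> (\<forall>t\<ge>1. \<psi> t > 0) \<and> continuous_on {1..} \<psi> \<and> convex_on {1..} \<psi>
      \<and> (\<psi> \<longlongrightarrow> 0) at_top"

definition eta :: "(real \<Rightarrow> real) \<Rightarrow> real \<Rightarrow> real" where
  "eta \<psi> t = the_inv_into {1..} \<psi> (\<psi> t / 2)"

definition mu :: "(real \<Rightarrow> real) \<Rightarrow> real \<Rightarrow> real" where
  "mu \<psi> t = t / (eta \<psi> t - t)"

definition class_M_plus_inf :: "(real \<Rightarrow> real) \<Rightarrow> bool" where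
  "class_M_plus_inf \<psi> \<longleftrightarrow> class_M \<psi> \<and> mono_on {1..} (mu \<psi>) \<and> filterlim (mu \<psi>) at_top at_top"

definition right_deriv :: "(real \<Rightarrow> real) \<Rightarrow> real \<Rightarrow> real" where
  "right_deriv f t = Lim (at_right t) (\<lambda>s. (f s - f t) / (s - t))"

end

theory Submission
  imports Defs
begin

text \<open>Write \<open>d = \<eta>(t) - t\<close>. Convexity places the right derivative below the slope
  \<open>-\<psi>(t)/(2d)\<close> of the chord from \<open>t\<close> to \<open>\<eta>(t)\<close>, which gives the upper estimate. For the lower
  estimate, monotonicity of \<open>\<mu>\<close> means that \<open>\<eta>(s)/s\<close> decreases, so for \<open>s > t\<close> we have
  \<open>\<psi>(s) = 2\<psi>(\<eta>(s)) \<ge> 2\<psi>(s\<eta>(t)/t)\<close>; bounding the latter by the chord through \<open>t\<close> and \<open>\<eta>(t)\<close>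
  bounds every secant slope at \<open>t\<close>, hence \<open>|\<psi>'(t)|\<close>, by \<open>\<eta>(t)\<psi>(t)/(t d)\<close>. Finally
  \<open>\<mu>(t) \<ge> b\<close> gives \<open>t/\<eta>(t) \<ge> b/(b+1)\<close>.\<close>

lemma convex_on_secant_mono:
  fixes f :: "real \<Rightarrow> real"
  assumes "convex_on {t..} f" and "t < x" and "x \<le> y"
  shows "(f x - f t) / (x - t) \<le> (f y - f t) / (y - t)"
proof (cases "x = y")
  case False
  then have "(f t - f x) / (t - x) \<le> (f t - f y) / (t - y)"
    using convex_on_slope_le(1)[OF assms(1), of t y x] assms(2,3) by auto
  then show ?thesis
    by (metis minus_diff_eq minus_divide_divide)
qed simp

lemma convex_on_right_deriv_tendsto:
  fixes f :: "real \<Rightarrow> real"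
  assumes "convex_on {t..} f" and "\<And>s. t < s \<Longrightarrow> K \<le> (f s - f t) / (s - t)"
  shows "((\<lambda>s. (f s - f t) / (s - t)) \<longlongrightarrow> right_deriv f t) (at_right t)"
proof -
  let ?q = "\<lambda>s. (f s - f t) / (s - t)"
  have "(?q \<longlongrightarrow> Inf (?q ` ({t<..} \<inter> UNIV))) (at t within ({t<..} \<inter> UNIV))"
  proof (rule Lim_right_bound)
    show "?q x \<le> ?q y" if "t < x" "x \<le> y" for x y
      using convex_on_secant_mono[OF assms(1) that] .
    show "K \<le> ?q x" if "t < x" for x
      using assms(2)[OF that] .
  qed
  then have lim: "(?q \<longlongrightarrow> Inf (?q ` {t<..})) (at_right t)"
    by simp
  then have "right_deriv f t = Inf (?q ` {t<..})"
    unfolding right_deriv_def by (rule tendsto_Lim[OF trivial_limit_at_right_real])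
  with lim show ?thesis
    by simp
qed

lemma convex_on_right_deriv_le_secant:
  fixes f :: "real \<Rightarrow> real"
  assumes "convex_on {t..} f" and "\<And>s. t < s \<Longrightarrow> K \<le> (f s - f t) / (s - t)" and "t < u"
  shows "right_deriv f t \<le> (f u - f t) / (u - t)"
proof -
  have "\<forall>\<^sub>F s in at_right t. (f s - f t) / (s - t) \<le> (f u - f t) / (u - t)"
    unfolding eventually_at_right[OF assms(3)]
    using assms(1,3) convex_on_secant_mono by (auto intro: exI[of _ u])
  then show ?thesis
    using tendsto_upperbound[OF convex_on_right_deriv_tendsto[OF assms(1,2)]] by simp
qed

lemma convex_on_right_deriv_ge:
  fixes f :: "real \<Rightarrow> real"
  assumes "convex_on {t..} f" and "\<And>s. t < s \<Longrightarrow> K \<le> (f s - f t) / (s - t)"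
  shows "K \<le> right_deriv f t"
proof -
  have "\<forall>\<^sub>F s in at_right t. K \<le> (f s - f t) / (s - t)"
    using eventually_at_right_less by (rule eventually_mono) (rule assms(2))
  then show ?thesis
    using tendsto_lowerbound[OF convex_on_right_deriv_tendsto[OF assms]] by simp
qed

lemma secant_ge_of_linear_lower_bound:
  fixes a c s t y :: real
  assumes "t < s"
  shows "c - (s - t) * a \<le> y \<longleftrightarrow> - a \<le> (y - c) / (s - t)"
  using assms by (simp add: pos_le_divide_eq algebra_simps)

lemma class_M_eventually_less:
  assumes "class_M \<psi>" and "c > 0"
  shows "\<exists>z>y. \<psi> z < c"
proof -
  have "(\<psi> \<longlongrightarrow> 0) at_top"
    using assms(1) by (simp add: class_M_def)
  then have "\<forall>\<^sub>F z in at_top. \<psi> z < c"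
    using assms(2) by (rule order_tendstoD(2))
  then have "\<forall>\<^sub>F z in at_top. z > y \<and> \<psi> z < c"
    by (intro eventually_conj eventually_gt_at_top)
  then obtain N where "\<And>z. z \<ge> N \<Longrightarrow> z > y \<and> \<psi> z < c"
    by (auto simp: eventually_at_top_linorder)
  then show ?thesis
    by (meson order_refl)
qed

lemma class_M_decreasing:
  assumes M: "class_M \<psi>" and "1 \<le> x" and "x < y"
  shows "\<psi> y < \<psi> x"
proof (rule ccontr)
  assume "\<not> \<psi> y < \<psi> x"
  have "\<psi> x > 0" and convex: "convex_on {1..} \<psi>"
    using M \<open>1 \<le> x\<close> by (auto simp: class_M_def)
  then obtain z where "z > y" and "\<psi> z < \<psi> x"
    using class_M_eventually_less[OF M] by blast
  have "(\<psi> x - \<psi> y) / (x - y) \<le> (\<psi> x - \<psi> z) / (x - z)"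
    using convex_on_slope_le(1)[OF convex, of x z y] assms \<open>z > y\<close> by auto
  moreover have "(\<psi> x - \<psi> y) / (x - y) \<ge> 0"
    using \<open>\<not> \<psi> y < \<psi> x\<close> \<open>x < y\<close> by (intro divide_nonpos_neg) auto
  moreover have "(\<psi> x - \<psi> z) / (x - z) < 0"
    using \<open>z > y\<close> \<open>x < y\<close> \<open>\<psi> z < \<psi> x\<close> by (intro divide_pos_neg) auto
  ultimately show False by linarith
qed

lemma class_M_inj_on: "class_M \<psi> \<Longrightarrow> inj_on \<psi> {1..}"
  by (rule inj_onI) (metis atLeast_iff class_M_decreasing linorder_cases order_less_irrefl)

lemma class_M_eta:
  assumes M: "class_M \<psi>" and "1 \<le> x"
  shows "x < eta \<psi> x" and "\<psi> (eta \<psi> x) = \<psi> x / 2"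
proof -
  have pos: "\<psi> x > 0" and cont: "continuous_on {1..} \<psi>"
    using M \<open>1 \<le> x\<close> by (auto simp: class_M_def)
  obtain z where "z > x" and "\<psi> z < \<psi> x / 2"
    using class_M_eventually_less[OF M, of "\<psi> x / 2" x] pos by auto
  moreover have "continuous_on {x..z} \<psi>"
    using \<open>1 \<le> x\<close> by (intro continuous_on_subset[OF cont]) auto
  ultimately obtain s where s: "x \<le> s" "\<psi> s = \<psi> x / 2"
    using IVT2'[of \<psi> z "\<psi> x / 2" x] pos by auto
  have "eta \<psi> x = s"
    unfolding eta_def s(2)[symmetric]
    using s(1) \<open>1 \<le> x\<close> by (simp add: the_inv_into_f_f[OF class_M_inj_on[OF M]])
  moreover have "s \<noteq> x"
    using s pos by auto
  ultimately show "x < eta \<psi> x" and "\<psi> (eta \<psi> x) = \<psi> x / 2"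
    using s by auto
qed

lemma class_M_above_chord_beyond_eta:
  assumes M: "class_M \<psi>" and "1 \<le> t" and "eta \<psi> t \<le> u"
  shows "\<psi> t - (u - t) * \<psi> t / (2 * (eta \<psi> t - t)) \<le> \<psi> u"
proof -
  define e where "e = eta \<psi> t"
  have "t < e" and half: "\<psi> e = \<psi> t / 2"
    using class_M_eta[OF M \<open>1 \<le> t\<close>] by (simp_all add: e_def)
  have "convex_on {t..} \<psi>"
    using M \<open>1 \<le> t\<close> by (auto simp: class_M_def intro: convex_on_subset)
  then have "(\<psi> e - \<psi> t) / (e - t) \<le> (\<psi> u - \<psi> t) / (u - t)"
    using convex_on_secant_mono \<open>t < e\<close> assms(3) by (simp add: e_def)
  moreover have "(\<psi> e - \<psi> t) / (e - t) = - \<psi> t / (2 * (e - t))"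
    using half \<open>t < e\<close> by (simp add: field_simps)
  ultimately have "- \<psi> t / (2 * (e - t)) * (u - t) \<le> \<psi> u - \<psi> t"
    using \<open>t < e\<close> assms(3) by (simp add: pos_le_divide_eq e_def)
  then show ?thesis
    by (simp add: e_def mult.commute)
qed

lemma class_M_plus_inf_eta_div_antimono:
  assumes "class_M_plus_inf \<psi>" and "1 \<le> t" and "t \<le> s"
  shows "eta \<psi> s / s \<le> eta \<psi> t / t"
proof -
  have M: "class_M \<psi>" and "mono_on {1..} (mu \<psi>)"
    using assms(1) by (auto simp: class_M_plus_inf_def)
  then have "mu \<psi> t \<le> mu \<psi> s"
    using assms(2,3) by (auto intro: mono_onD)
  then have "t / (eta \<psi> t - t) \<le> s / (eta \<psi> s - s)"
    by (simp add: mu_def)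
  moreover have "t < eta \<psi> t" and "s < eta \<psi> s"
    using class_M_eta(1)[OF M] assms(2,3) by auto
  ultimately show ?thesis
    using assms(2,3) by (simp add: field_simps)
qed

lemma class_M_plus_inf_secant_lower_bound:
  assumes MP: "class_M_plus_inf \<psi>" and "1 \<le> t" and "t < s"
  shows "- (eta \<psi> t * \<psi> t / (t * (eta \<psi> t - t))) \<le> (\<psi> s - \<psi> t) / (s - t)"
proof -
  have M: "class_M \<psi>"
    using MP by (simp add: class_M_plus_inf_def)
  define e where "e = eta \<psi> t"
  define u where "u = s * e / t"
  have "t < e"
    using class_M_eta(1)[OF M \<open>1 \<le> t\<close>] by (simp add: e_def)
  have "eta \<psi> s \<le> u"
    using class_M_plus_inf_eta_div_antimono[OF MP \<open>1 \<le> t\<close>, of s] assms(2,3)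
    by (simp add: u_def e_def divide_simps mult.commute)
  have "e \<le> u"
    using \<open>t < e\<close> assms(2,3) by (simp add: u_def field_simps mult_mono)
  have "s < eta \<psi> s"
    using class_M_eta(1)[OF M] assms(2,3) by simp
  then have "\<psi> u \<le> \<psi> (eta \<psi> s)"
    using class_M_decreasing[OF M, of "eta \<psi> s" u] \<open>eta \<psi> s \<le> u\<close> assms(2,3)
    by (cases "eta \<psi> s = u") auto
  also have "\<dots> = \<psi> s / 2"
    using class_M_eta(2)[OF M] assms(2,3) by simp
  finally have "2 * (\<psi> t - (u - t) * \<psi> t / (2 * (e - t))) \<le> \<psi> s"
    using class_M_above_chord_beyond_eta[OF M \<open>1 \<le> t\<close>, of u] \<open>e \<le> u\<close> by (simp add: e_def)
  moreover have "2 * (\<psi> t - (u - t) * \<psi> t / (2 * (e - t)))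
      = \<psi> t - (s - t) * (e * \<psi> t / (t * (e - t)))"
    using \<open>t < e\<close> assms(2) unfolding u_def by (simp add: field_simps)
  ultimately have "\<psi> t - (s - t) * (e * \<psi> t / (t * (e - t))) \<le> \<psi> s"
    by simp
  then show ?thesis
    using assms(3) unfolding e_def by (simp only: secant_ge_of_linear_lower_bound)
qed

lemma class_M_plus_inf_right_deriv_bounds:
  assumes MP: "class_M_plus_inf \<psi>" and "1 \<le> t"
  shows "- (eta \<psi> t * \<psi> t / (t * (eta \<psi> t - t))) \<le> right_deriv \<psi> t"
    and "right_deriv \<psi> t \<le> - \<psi> t / (2 * (eta \<psi> t - t))"
proof -
  have M: "class_M \<psi>"
    using MP by (simp add: class_M_plus_inf_def)
  have convex: "convex_on {t..} \<psi>"
    using M \<open>1 \<le> t\<close> by (auto simp: class_M_def intro: convex_on_subset)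
  note secant_bound = class_M_plus_inf_secant_lower_bound[OF MP \<open>1 \<le> t\<close>]
  show "- (eta \<psi> t * \<psi> t / (t * (eta \<psi> t - t))) \<le> right_deriv \<psi> t"
    by (rule convex_on_right_deriv_ge[OF convex secant_bound])
  have "right_deriv \<psi> t \<le> (\<psi> (eta \<psi> t) - \<psi> t) / (eta \<psi> t - t)"
    by (rule convex_on_right_deriv_le_secant[OF convex secant_bound class_M_eta(1)[OF M \<open>1 \<le> t\<close>]])
  then show "right_deriv \<psi> t \<le> - \<psi> t / (2 * (eta \<psi> t - t))"
    using class_M_eta(2)[OF M \<open>1 \<le> t\<close>] by simp
qed

lemma class_M_plus_inf_quotient_bounds:
  assumes MP: "class_M_plus_inf \<psi>" and "1 \<le> t"
  shows "t / eta \<psi> t * (eta \<psi> t - t) \<le> \<psi> t / \<bar>right_deriv \<psi> t\<bar>"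
    and "\<psi> t / \<bar>right_deriv \<psi> t\<bar> \<le> 2 * (eta \<psi> t - t)"
proof -
  have M: "class_M \<psi>"
    using MP by (simp add: class_M_plus_inf_def)
  define e d P L where "e = eta \<psi> t" and "d = eta \<psi> t - t"
    and "P = \<psi> t" and "L = right_deriv \<psi> t"
  have "P > 0" "d > 0" "e = t + d"
    using M class_M_eta(1)[OF M] assms(2) by (auto simp: class_M_def P_def d_def e_def)
  have L_low: "- (e * P / (t * d)) \<le> L" and L_up: "L \<le> - P / (2 * d)"
    using class_M_plus_inf_right_deriv_bounds[OF MP \<open>1 \<le> t\<close>]
    by (simp_all add: e_def d_def P_def L_def)
  have "0 < P / (2 * d)"
    using \<open>P > 0\<close> \<open>d > 0\<close> by simp
  then have "0 < - L" and abs_L: "\<bar>L\<bar> = - L"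
    using L_up by simp_all
  have "0 < e * P / (t * d)"
    using \<open>P > 0\<close> \<open>d > 0\<close> \<open>e = t + d\<close> \<open>1 \<le> t\<close> by simp
  then have "P / (e * P / (t * d)) \<le> P / - L"
    using L_low \<open>0 < - L\<close> \<open>P > 0\<close> by (intro divide_left_mono mult_pos_pos) auto
  then show "t / e * d \<le> P / \<bar>L\<bar>"
    using abs_L \<open>P > 0\<close> by simp
  have "P / - L \<le> P / (P / (2 * d))"
    using L_up \<open>0 < P / (2 * d)\<close> \<open>0 < - L\<close> \<open>P > 0\<close> by (intro divide_left_mono mult_pos_pos) auto
  then show "P / \<bar>L\<bar> \<le> 2 * d"
    using abs_L \<open>P > 0\<close> by simp
qed

theorem lemma2:
  fixes \<psi> :: "real \<Rightarrow> real" and b t :: real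
  assumes "class_M_plus_inf \<psi>" and "b > 0" and "t \<ge> 1" and "mu \<psi> t \<ge> b"
  shows "1/2 * (b^2 / (b+1)^2) * (eta \<psi> t - t) \<le> \<psi> t / \<bar>right_deriv \<psi> t\<bar>
       \<and> \<psi> t / \<bar>right_deriv \<psi> t\<bar> \<le> 4 * (1 + 1/b) * (eta \<psi> t - t)"
proof
  define e d where "e = eta \<psi> t" and "d = eta \<psi> t - t"
  have "d > 0" "e = t + d"
    using class_M_eta(1)[OF _ \<open>t \<ge> 1\<close>] assms(1) by (auto simp: class_M_plus_inf_def d_def e_def)
  have "b^2 \<le> 2 * b * (b + 1)"
    using assms(2) by (simp add: power2_eq_square algebra_simps)
  then have "1/2 * (b^2 / (b+1)^2) \<le> b / (b + 1)"
    using assms(2) by (simp add: divide_simps power2_eq_square)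
  also have "b / (b + 1) \<le> t / e"
  proof -
    have "b * d \<le> t"
      using assms(4) \<open>d > 0\<close> by (simp add: mu_def d_def le_divide_eq)
    then have "b * e \<le> t * (b + 1)"
      using \<open>e = t + d\<close> by (simp add: algebra_simps)
    then show ?thesis
      using assms(2,3) \<open>d > 0\<close> \<open>e = t + d\<close> by (simp add: divide_simps)
  qed
  finally have "1/2 * (b^2 / (b+1)^2) * d \<le> t / e * d"
    using \<open>d > 0\<close> by (metis less_imp_le mult_right_mono)
  then show "1/2 * (b^2 / (b+1)^2) * (eta \<psi> t - t) \<le> \<psi> t / \<bar>right_deriv \<psi> t\<bar>"
    using class_M_plus_inf_quotient_bounds(1)[OF assms(1,3)] by (simp add: e_def d_def)
  have "2 * d \<le> 4 * (1 + 1/b) * d"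
    using \<open>d > 0\<close> assms(2) by (simp add: field_simps)
  then show "\<psi> t / \<bar>right_deriv \<psi> t\<bar> \<le> 4 * (1 + 1/b) * (eta \<psi> t - t)"
    using class_M_plus_inf_quotient_bounds(2)[OF assms(1,3)] by (simp add: d_def)
qed

end
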